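(* (1) If $f,g\in\mathcal{P}$, then $\gamma_1 f+\gamma_2 g\in\mathcal{P}$ for all $\gamma_1,\gamma_2\ge0$ (so $\mathcal{P}$ is a convex cone in $\mathcal{L}(G)$). (2) The extreme rays of the cone $\mathcal{P}$ are the sets $\{\gamma u_k:\gamma\ge0\}$, $k\in\{1,\dots,n\}$. (3) $\mathcal{P}_+$ is a convex cone and it is the interior of $\mathcal{P}$. (4) If $f,g\in\mathcal{P}$, then $f\ast g\in\mathcal{P}$. (5) $f\in\mathcal{P}$ if and only if there exists $g\in\mathcal{L}(G)$ with $f=g\ast g$.
   Context: Let $G$ be a graph with vertices $v_1,\dots,v_n$, symmetric non-negative weighted adjacency matrix $\mathbf{A}$, degree matrix $\mathbf{D}=\mathrm{diag}(\sum_k\mathbf{A}_{ik})$ (positive), and normalized Laplacian $\mathbf{L}=\mathbf{I}_n-\mathbf{D}^{-1/2}\mathbf{A}\mathbf{D}^{-1/2}$. Signals are vectors in $\mathcal{L}(G)\cong\mathbb{R}^n$ with standard basis $e_1,\dots,e_n$. Fix an orthonormal eigendecomposition $\mathbf{L}=\mathbf{U}\,\mathrm{diag}(\lambda_1,\dots,\lambda_n)\mathbf{U}^\intercal$ with columns $u_1,\dots,u_n$. Fourier transform $\hat{x}=\mathbf{U}^\intercal x$; convolution $x\ast y=\mathbf{C}_x y$ with $\mathbf{C}_x=\mathbf{U}\,\mathrm{diag}(\hat{x})\mathbf{U}^\intercal$. For $f\in\mathcal{L}(G)$ let $(\mathbf{K}_f)_{ij}=(\mathbf{C}_{e_j}f)(v_i)$;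 $f$ is positive semi-definite (positive definite) if $\mathbf{K}_f$ is symmetric and positive semi-definite (strictly positive definite). $\mathcal{P}$ and $\mathcal{P}_+$ denote the sets of positive semi-definite and positive definite functions, respectively. *)

theory Defs
  imports "HOL-Analysis.Analysis"
begin

definition diag_mat :: "real^'n \<Rightarrow> real^'n^'n" where
  "diag_mat v = (\<chi> i j. if i = j then v $ i else 0)"

definition degree_vec :: "real^'n^'n \<Rightarrow> real^'n" where
  "degree_vec A = (\<chi> i. \<Sum>k\<in>UNIV. A $ i $ k)"

definition norm_laplacian :: "real^'n^'n \<Rightarrow> real^'n^'n" where
  "norm_laplacian A =
     mat 1 - diag_mat (\<chi> i. 1 / sqrt (degree_vec A $ i)) ** A
               ** diag_mat (\<chi> i. 1 / sqrt (degree_vec A $ i))"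

definition graph_fourier :: "real^'n^'n \<Rightarrow> real^'n \<Rightarrow> real^'n" where
  "graph_fourier U x = transpose U *v x"

definition conv_mat :: "real^'n^'n \<Rightarrow> real^'n \<Rightarrow> real^'n^'n" where
  "conv_mat U x = U ** diag_mat (graph_fourier U x) ** transpose U"

definition graph_conv :: "real^'n^'n \<Rightarrow> real^'n \<Rightarrow> real^'n \<Rightarrow> real^'n" where
  "graph_conv U x y = conv_mat U x *v y"

definition K_mat :: "real^'n^'n \<Rightarrow> real^'n \<Rightarrow> real^'n^'n" where
  "K_mat U f = (\<chi> i j. (conv_mat U (axis j 1) *v f) $ i)"

definition psd_fun :: "real^'n^'n \<Rightarrow> real^'n \<Rightarrow> bool" where
  "psd_fun U f \<longleftrightarrow> transpose (K_mat U f) = K_mat U f \<and>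
     (\<forall>x. 0 \<le> x \<bullet> (K_mat U f *v x))"

definition pd_fun :: "real^'n^'n \<Rightarrow> real^'n \<Rightarrow> bool" where
  "pd_fun U f \<longleftrightarrow> transpose (K_mat U f) = K_mat U f \<and>
     (\<forall>x. x \<noteq> 0 \<longrightarrow> 0 < x \<bullet> (K_mat U f *v x))"

definition PSD_set :: "real^'n^'n \<Rightarrow> (real^'n) set" where
  "PSD_set U = {f. psd_fun U f}"

definition PD_set :: "real^'n^'n \<Rightarrow> (real^'n) set" where
  "PD_set U = {f. pd_fun U f}"

definition ray :: "'a::real_vector \<Rightarrow> 'a set" where
  "ray x = {\<gamma> *\<^sub>R x | \<gamma>. \<gamma> \<ge> 0}"

definition extreme_ray :: "'a::real_vector set \<Rightarrow> 'a set \<Rightarrow> bool" where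
  "extreme_ray C R \<longleftrightarrow> (\<exists>x\<in>C. x \<noteq> 0 \<and> R = ray x \<and>
     (\<forall>y\<in>C. \<forall>z\<in>C. y + z \<in> R \<longrightarrow> y \<in> R \<and> z \<in> R))"

end

(* The matrix K_f is the convolution matrix C_f = U diag(f^) U^T, whose quadratic form is
   x |-> sum_k f^_k (x^_k)^2. Since the Fourier transform f |-> U^T f is a linear bijection,
   P and P_+ are the preimages of the closed and the open nonnegative orthant, and convolution
   becomes the coordinatewise product of Fourier coefficients. All five claims are thereby
   reduced to properties of the orthant: it is a convex cone whose interior is the open orthant,
   whose extreme rays are the coordinate axes (pulled back to the rays of the eigenvectors u_k),
   which is closed under products and consists of squares. *)

theory Submission
  imports Defs
begin

lemma diag_mat_mult_vector: "diag_mat v *v w = v * w"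
proof -
  have "diag_mat v $ i $ j * w $ j = (if j = i then v $ i * w $ i else 0)" for i j
    by (simp add: diag_mat_def)
  then show ?thesis
    by (simp add: vec_eq_iff matrix_vector_mult_def)
qed

lemma transpose_diag_mat: "transpose (diag_mat v) = diag_mat v"
  by (simp add: vec_eq_iff diag_mat_def transpose_def)

lemma conv_mat_mult_vector:
  "conv_mat U f *v x = U *v (graph_fourier U f * graph_fourier U x)"
  by (simp add: conv_mat_def matrix_vector_mul_assoc[symmetric] diag_mat_mult_vector graph_fourier_def)

lemma K_mat_eq_conv_mat: "K_mat U f = conv_mat U f"
proof -
  have "conv_mat U (axis j 1) *v f = conv_mat U f *v axis j 1" for j
    by (simp add: conv_mat_mult_vector mult.commute)
  then show ?thesis
    by (simp add: K_mat_def vec_eq_iff matrix_vector_mult_basis column_def)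
qed

lemma symmetric_conv_mat: "transpose (conv_mat U f) = conv_mat U f"
  by (simp add: conv_mat_def matrix_transpose_mul matrix_mul_assoc transpose_diag_mat)

lemma inner_conv_mat_mult_vector:
  "x \<bullet> (conv_mat U f *v x) = (\<Sum>k\<in>UNIV. graph_fourier U f $ k * (graph_fourier U x $ k)\<^sup>2)"
proof -
  have "x \<bullet> (conv_mat U f *v x) = (x v* U) \<bullet> (graph_fourier U f * graph_fourier U x)"
    by (simp add: conv_mat_mult_vector dot_lmul_matrix)
  also have "x v* U = graph_fourier U x"
    by (simp add: graph_fourier_def)
  finally show ?thesis
    by (simp add: inner_vec_def power2_eq_square mult_ac)
qed

lemma graph_fourier_add: "graph_fourier U (f + g) = graph_fourier U f + graph_fourier U g"
  and graph_fourier_diff: "graph_fourier U (f - g) = graph_fourier U f - graph_fourier U g"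
  and graph_fourier_scaleR: "graph_fourier U (c *\<^sub>R f) = c *\<^sub>R graph_fourier U f"
  by (simp_all add: graph_fourier_def matrix_vector_right_distrib
      matrix_vector_mult_diff_distrib matrix_vector_mult_scaleR)

lemma ray_scaleR:
  assumes "0 < c"
  shows "ray (c *\<^sub>R v) = ray v"
proof -
  have "(\<exists>\<gamma>\<ge>0. y = \<gamma> *\<^sub>R c *\<^sub>R v) \<longleftrightarrow> (\<exists>\<gamma>\<ge>0. y = \<gamma> *\<^sub>R v)" for y
  proof
    assume "\<exists>\<gamma>\<ge>0. y = \<gamma> *\<^sub>R c *\<^sub>R v"
    then obtain \<gamma> where "0 \<le> \<gamma>" "y = (\<gamma> * c) *\<^sub>R v" by auto
    with assms show "\<exists>\<gamma>\<ge>0. y = \<gamma> *\<^sub>R v"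
      by (intro exI[of _ "\<gamma> * c"]) auto
  next
    assume "\<exists>\<gamma>\<ge>0. y = \<gamma> *\<^sub>R v"
    then obtain \<gamma> where "0 \<le> \<gamma>" "y = \<gamma> *\<^sub>R v" by blast
    with assms show "\<exists>\<gamma>\<ge>0. y = \<gamma> *\<^sub>R c *\<^sub>R v"
      by (intro exI[of _ "\<gamma> / c"]) auto
  qed
  then show ?thesis
    by (auto simp: ray_def)
qed

lemma interior_nonneg_orthant:
  "interior {x :: real^'n. \<forall>k. 0 \<le> x $ k} = {x. \<forall>k. 0 < x $ k}"
proof
  show "interior {x :: real^'n. \<forall>k. 0 \<le> x $ k} \<subseteq> {x. \<forall>k. 0 < x $ k}"
    using interior_mono[of "{x :: real^'n. \<forall>k. 0 \<le> x $ k}" "{x. x $ k \<ge> 0}" for k]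
    by auto
  have "{x :: real^'n. \<forall>k. 0 < x $ k} = (\<Inter>k. {x. 0 < x $ k})"
    by auto
  then have "open {x :: real^'n. \<forall>k. 0 < x $ k}"
    by (simp add: open_INT open_halfspace_component_gt_cart)
  then show "{x :: real^'n. \<forall>k. 0 < x $ k} \<subseteq> interior {x. \<forall>k. 0 \<le> x $ k}"
    by (rule interior_maximal[rotated]) (auto simp: less_imp_le)
qed

context
  fixes U :: "real^'n^'n"
  assumes orth: "orthogonal_matrix U"
begin

lemma graph_fourier_mult_vector: "graph_fourier U (U *v v) = v"
  using orth by (simp add: graph_fourier_def matrix_vector_mul_assoc orthogonal_matrix_def)

lemma mult_vector_graph_fourier: "U *v graph_fourier U f = f"
proof -
  have "U *v graph_fourier U f = (U ** transpose U) *v f"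
    unfolding graph_fourier_def by (rule matrix_vector_mul_assoc)
  with orth show ?thesis
    by (simp add: orthogonal_matrix_def)
qed

lemma graph_fourier_inject: "graph_fourier U f = graph_fourier U g \<longleftrightarrow> f = g"
  by (metis mult_vector_graph_fourier)

lemma graph_fourier_eq_0_iff: "graph_fourier U f = 0 \<longleftrightarrow> f = 0"
  using graph_fourier_inject[of f 0] by (simp add: graph_fourier_def)

lemma graph_fourier_column: "graph_fourier U (column k U) = axis k 1"
  using graph_fourier_mult_vector[of "axis k 1"] by (simp add: matrix_vector_mult_basis)

lemma column_neq_0: "column k U \<noteq> 0"
  using graph_fourier_column[of k] graph_fourier_eq_0_iff[of "column k U"]
  by (simp add: axis_eq_0_iff)

lemma graph_fourier_graph_conv:
  "graph_fourier U (graph_conv U f g) = graph_fourier U f * graph_fourier U g"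
  by (simp add: graph_conv_def conv_mat_mult_vector graph_fourier_mult_vector)

lemma inner_K_mat_column: "column k U \<bullet> (K_mat U f *v column k U) = graph_fourier U f $ k"
proof -
  have "graph_fourier U f $ l * (axis k 1 $ l)\<^sup>2 = (if l = k then graph_fourier U f $ k else 0)" for l
    by (simp add: axis_def)
  then show ?thesis
    by (simp add: K_mat_eq_conv_mat inner_conv_mat_mult_vector graph_fourier_column)
qed

lemma PSD_set_iff: "f \<in> PSD_set U \<longleftrightarrow> (\<forall>k. 0 \<le> graph_fourier U f $ k)"
proof
  show "\<forall>k. 0 \<le> graph_fourier U f $ k" if "f \<in> PSD_set U"
    using that by (auto simp: PSD_set_def psd_fun_def simp flip: inner_K_mat_column)
  show "f \<in> PSD_set U" if "\<forall>k. 0 \<le> graph_fourier U f $ k"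
    using that by (simp add: PSD_set_def psd_fun_def K_mat_eq_conv_mat symmetric_conv_mat
        inner_conv_mat_mult_vector sum_nonneg)
qed

lemma PD_set_iff: "f \<in> PD_set U \<longleftrightarrow> (\<forall>k. 0 < graph_fourier U f $ k)"
proof
  show "\<forall>k. 0 < graph_fourier U f $ k" if "f \<in> PD_set U"
    using that column_neq_0 by (auto simp: PD_set_def pd_fun_def simp flip: inner_K_mat_column)
next
  assume pos: "\<forall>k. 0 < graph_fourier U f $ k"
  have "0 < x \<bullet> (conv_mat U f *v x)" if "x \<noteq> 0" for x
  proof -
    have "graph_fourier U x \<noteq> 0"
      using that graph_fourier_eq_0_iff by blast
    then obtain j where "graph_fourier U x $ j \<noteq> 0"
      by (auto simp: vec_eq_iff)
    with pos show ?thesis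
      unfolding inner_conv_mat_mult_vector
      by (intro sum_pos2[of UNIV j]) (auto simp: less_imp_le)
  qed
  then show "f \<in> PD_set U"
    by (simp add: PD_set_def pd_fun_def K_mat_eq_conv_mat symmetric_conv_mat)
qed

lemma PSD_set_cone:
  "f \<in> PSD_set U \<Longrightarrow> g \<in> PSD_set U \<Longrightarrow> 0 \<le> a \<Longrightarrow> 0 \<le> b \<Longrightarrow> a *\<^sub>R f + b *\<^sub>R g \<in> PSD_set U"
  by (simp add: PSD_set_iff graph_fourier_add graph_fourier_scaleR)

lemma PD_set_cone:
  assumes "f \<in> PD_set U" "g \<in> PD_set U" "0 \<le> a" "0 \<le> b" "0 < a \<or> 0 < b"
  shows "a *\<^sub>R f + b *\<^sub>R g \<in> PD_set U"
proof -
  have "0 < a * graph_fourier U f $ k + b * graph_fourier U g $ k" for k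
  proof -
    have "0 < graph_fourier U f $ k" "0 < graph_fourier U g $ k"
      using assms(1,2) by (simp_all add: PD_set_iff)
    with assms(3-5) show ?thesis
      by (smt (verit) mult_pos_pos mult_nonneg_nonneg)
  qed
  then show ?thesis
    by (simp add: PD_set_iff graph_fourier_add graph_fourier_scaleR)
qed

lemma graph_conv_PSD_set: "f \<in> PSD_set U \<Longrightarrow> g \<in> PSD_set U \<Longrightarrow> graph_conv U f g \<in> PSD_set U"
  by (simp add: PSD_set_iff graph_fourier_graph_conv)

lemma PSD_set_iff_graph_conv_square: "f \<in> PSD_set U \<longleftrightarrow> (\<exists>g. f = graph_conv U g g)"
proof
  assume "f \<in> PSD_set U"
  define g where "g = U *v (\<chi> k. sqrt (graph_fourier U f $ k))"
  have "graph_fourier U (graph_conv U g g) = graph_fourier U f"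
    using \<open>f \<in> PSD_set U\<close>
    by (simp add: PSD_set_iff graph_fourier_graph_conv g_def graph_fourier_mult_vector vec_eq_iff)
  then show "\<exists>g. f = graph_conv U g g"
    by (auto simp: graph_fourier_inject)
qed (auto simp: PSD_set_iff graph_fourier_graph_conv)

lemma image_mult_vector: "(\<lambda>v. U *v v) ` S = {f. graph_fourier U f \<in> S}"
proof (intro set_eqI iffI)
  fix f
  assume "f \<in> {f. graph_fourier U f \<in> S}"
  then have "graph_fourier U f \<in> S"
    by simp
  with mult_vector_graph_fourier[of f, symmetric] show "f \<in> (\<lambda>v. U *v v) ` S"
    by (rule image_eqI)
qed (auto simp: graph_fourier_mult_vector)

lemma interior_PSD_set: "interior (PSD_set U) = PD_set U"
proof -
  have PSD: "PSD_set U = (\<lambda>v. U *v v) ` {v. \<forall>k. 0 \<le> v $ k}"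
    unfolding image_mult_vector by (auto simp: PSD_set_iff)
  have PD: "PD_set U = (\<lambda>v. U *v v) ` {v. \<forall>k. 0 < v $ k}"
    unfolding image_mult_vector by (auto simp: PD_set_iff)
  have "inj (\<lambda>v. U *v v)"
    by (rule injI) (metis graph_fourier_mult_vector)
  then have "interior ((\<lambda>v. U *v v) ` S) = (\<lambda>v. U *v v) ` interior S" for S
    by (rule interior_injective_linear_image[OF matrix_vector_mul_linear])
  then show ?thesis
    unfolding PSD PD by (simp only: interior_nonneg_orthant)
qed

lemma graph_fourier_eq_axis_iff:
  "graph_fourier U y = c *\<^sub>R axis k 1 \<longleftrightarrow> y = c *\<^sub>R column k U"
  by (metis graph_fourier_column graph_fourier_inject graph_fourier_scaleR)

lemma mem_ray_column_iff:
  "y \<in> ray (column k U) \<longleftrightarrow> y \<in> PSD_set U \<and> (\<forall>l. l \<noteq> k \<longrightarrow> graph_fourier U y $ l = 0)"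
proof -
  have "y \<in> ray (column k U) \<longleftrightarrow> (\<exists>\<gamma>\<ge>0. graph_fourier U y = \<gamma> *\<^sub>R axis k 1)"
    by (auto simp: ray_def graph_fourier_eq_axis_iff)
  also have "\<dots> \<longleftrightarrow> (\<forall>l. 0 \<le> graph_fourier U y $ l) \<and> (\<forall>l. l \<noteq> k \<longrightarrow> graph_fourier U y $ l = 0)"
  proof
    assume "(\<forall>l. 0 \<le> graph_fourier U y $ l) \<and> (\<forall>l. l \<noteq> k \<longrightarrow> graph_fourier U y $ l = 0)"
    then show "\<exists>\<gamma>\<ge>0. graph_fourier U y = \<gamma> *\<^sub>R axis k 1"
      by (intro exI[of _ "graph_fourier U y $ k"]) (auto simp: vec_eq_iff axis_def)
  qed (auto simp: axis_def)
  finally show ?thesis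
    by (simp add: PSD_set_iff)
qed

lemma extreme_ray_column: "extreme_ray (PSD_set U) (ray (column k U))"
proof -
  have "y \<in> ray (column k U)"
    if "y \<in> PSD_set U" "z \<in> PSD_set U" "y + z \<in> ray (column k U)" for y z
  proof -
    have "graph_fourier U y $ l = 0" if "l \<noteq> k" for l
    proof -
      have "graph_fourier U y $ l + graph_fourier U z $ l = 0"
        using \<open>y + z \<in> ray (column k U)\<close> \<open>l \<noteq> k\<close> by (simp add: mem_ray_column_iff graph_fourier_add)
      moreover have "0 \<le> graph_fourier U y $ l" "0 \<le> graph_fourier U z $ l"
        using \<open>y \<in> PSD_set U\<close> \<open>z \<in> PSD_set U\<close> by (simp_all add: PSD_set_iff)
      ultimately show ?thesis
        by linarith
    qed
    with \<open>y \<in> PSD_set U\<close> show ?thesis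
      by (simp add: mem_ray_column_iff)
  qed
  moreover have "column k U \<in> PSD_set U"
    by (simp add: PSD_set_iff graph_fourier_column axis_def)
  ultimately show ?thesis
    unfolding extreme_ray_def using column_neq_0 by (metis add.commute)
qed

lemma extreme_ray_PSD_set_imp:
  assumes "extreme_ray (PSD_set U) R"
  obtains k where "R = ray (column k U)"
proof -
  obtain x where x: "x \<in> PSD_set U" "x \<noteq> 0" "R = ray x"
    and extreme: "\<And>y z. y \<in> PSD_set U \<Longrightarrow> z \<in> PSD_set U \<Longrightarrow> y + z \<in> R \<Longrightarrow> z \<in> R"
    using assms unfolding extreme_ray_def by blast
  obtain k where "graph_fourier U x $ k \<noteq> 0"
    using \<open>x \<noteq> 0\<close> graph_fourier_eq_0_iff by (auto simp: vec_eq_iff)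
  with x(1) have pos: "0 < graph_fourier U x $ k"
    by (simp add: PSD_set_iff order_less_le)
  \<comment> \<open>Split off the k-th Fourier component y of x; extremality puts x - y on the ray of x,
    which its vanishing k-th coefficient only allows for x - y = 0.\<close>
  define y where "y = graph_fourier U x $ k *\<^sub>R column k U"
  have Fy: "graph_fourier U y = graph_fourier U x $ k *\<^sub>R axis k 1"
    by (simp add: y_def graph_fourier_eq_axis_iff)
  have "x - y \<in> R"
  proof (rule extreme)
    show "y \<in> PSD_set U" "x - y \<in> PSD_set U"
      using x(1) pos by (auto simp: PSD_set_iff graph_fourier_diff Fy axis_def)
    show "y + (x - y) \<in> R"
      using x(3) by (auto simp: ray_def intro: exI[of _ 1])
  qed
  then obtain \<gamma> where \<gamma>: "x - y = \<gamma> *\<^sub>R x"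
    using x(3) by (auto simp: ray_def)
  then have "graph_fourier U (x - y) $ k = graph_fourier U (\<gamma> *\<^sub>R x) $ k"
    by simp
  with pos have "\<gamma> = 0"
    by (simp add: graph_fourier_diff Fy graph_fourier_scaleR axis_def)
  with \<gamma> have "x = y"
    by simp
  with x(3) have "R = ray y"
    by simp
  also have "\<dots> = ray (column k U)"
    unfolding y_def by (rule ray_scaleR[OF pos])
  finally show ?thesis ..
qed

lemma extreme_rays_PSD_set: "{R. extreme_ray (PSD_set U) R} = {ray (column k U) | k. True}"
  using extreme_ray_column extreme_ray_PSD_set_imp by blast

end

theorem corollary1:
  fixes A U :: "real^'n^'n" and lam :: "real^'n"
  assumes sym: "transpose A = A"
    and nonneg: "\<forall>i j. 0 \<le> A $ i $ j"
    and deg_pos: "\<forall>i. 0 < degree_vec A $ i"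
    and orth: "orthogonal_matrix U"
    and eig: "norm_laplacian A = U ** diag_mat lam ** transpose U"
  shows
    "(\<forall>f\<in>PSD_set U. \<forall>g\<in>PSD_set U. \<forall>\<gamma>1 \<gamma>2. 0 \<le> \<gamma>1 \<longrightarrow> 0 \<le> \<gamma>2 \<longrightarrow>
        \<gamma>1 *\<^sub>R f + \<gamma>2 *\<^sub>R g \<in> PSD_set U)
     \<and> {R. extreme_ray (PSD_set U) R} = {ray (column k U) | k. True}
     \<and> (\<forall>f\<in>PD_set U. \<forall>g\<in>PD_set U. \<forall>\<gamma>1 \<gamma>2. 0 \<le> \<gamma>1 \<longrightarrow> 0 \<le> \<gamma>2 \<longrightarrow>
          (0 < \<gamma>1 \<or> 0 < \<gamma>2) \<longrightarrow> \<gamma>1 *\<^sub>R f + \<gamma>2 *\<^sub>R g \<in> PD_set U)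
     \<and> interior (PSD_set U) = PD_set U
     \<and> (\<forall>f\<in>PSD_set U. \<forall>g\<in>PSD_set U. graph_conv U f g \<in> PSD_set U)
     \<and> (\<forall>f. f \<in> PSD_set U \<longleftrightarrow> (\<exists>g. f = graph_conv U g g))"
proof (intro conjI)
  show "interior (PSD_set U) = PD_set U"
    by (rule interior_PSD_set[OF orth])
  show "{R. extreme_ray (PSD_set U) R} = {ray (column k U) | k. True}"
    by (rule extreme_rays_PSD_set[OF orth])
qed (use PSD_set_cone[OF orth] PD_set_cone[OF orth] graph_conv_PSD_set[OF orth]
      PSD_set_iff_graph_conv_square[OF orth] in blast)+

end
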